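(* Consider a market with $N$ players and $K\ge N$ arms in which every player has a strict preference order over arms and every arm has a strict preference order over players, and run the player-proposing Gale–Shapley (deferred acceptance) algorithm. Then at most $N$ proposals are made per player before termination. Consequently, each player's optimal stable match (its match in the player-optimal stable matching) is among its top $N$ preferred arms.
   Context: In player-proposing Gale–Shapley, each currently unmatched player proposes to its most preferred arm it has not yet proposed to; each arm tentatively holds the best proposer it has received (according to its strict preferences) and rejects the others; the algorithm terminates when every player is tentatively matched (or has exhausted its list), and outputs the player-optimal stable matching. *)

theory Defs
  imports Main
begin

text \<open>Players are 0..<N, arms are 0..<K.  Preferences are given as lists:
  plist p is player p's ranking of arms (most preferred first),
  alist a is arm a's ranking of players (most preferred first).\<close>

definition valid_prefs :: "nat \<Rightarrow> nat \<Rightarrow> (nat \<Rightarrow> nat list) \<Rightarrow> (nat \<Rightarrow> nat list) \<Rightarrow> bool" where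
  "valid_prefs N K plist alist \<longleftrightarrow>
     (\<forall>p<N. distinct (plist p) \<and> set (plist p) = {0..<K}) \<and>
     (\<forall>a<K. distinct (alist a) \<and> set (alist a) = {0..<N})"

definition prefers :: "'a list \<Rightarrow> 'a \<Rightarrow> 'a \<Rightarrow> bool" where
  "prefers xs x y \<longleftrightarrow> (\<exists>i j. i < j \<and> j < length xs \<and> xs ! i = x \<and> xs ! j = y)"

text \<open>State of deferred acceptance: (nxt, hold) where nxt p is the number of
  proposals player p has made so far and hold a is the player tentatively held by arm a.\<close>
type_synonym da_state = "(nat \<Rightarrow> nat) \<times> (nat \<Rightarrow> nat option)"

definition da_init :: da_state where
  "da_init = (\<lambda>_. 0, \<lambda>_. None)"

definition da_matched :: "nat \<Rightarrow> da_state \<Rightarrow> nat \<Rightarrow> bool" where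
  "da_matched K s p \<longleftrightarrow> (\<exists>a<K. snd s a = Some p)"

definition da_active :: "nat \<Rightarrow> nat \<Rightarrow> da_state \<Rightarrow> nat \<Rightarrow> bool" where
  "da_active N K s p \<longleftrightarrow> p < N \<and> \<not> da_matched K s p \<and> fst s p < K"

text \<open>One round of player-proposing Gale--Shapley: every active player proposes to
  its most preferred arm not yet proposed to; every arm keeps the best among its
  current holder and its new proposers and rejects the others.\<close>
definition da_step :: "nat \<Rightarrow> nat \<Rightarrow> (nat \<Rightarrow> nat list) \<Rightarrow> (nat \<Rightarrow> nat list) \<Rightarrow> da_state \<Rightarrow> da_state" where
  "da_step N K plist alist s =
     (let props = (\<lambda>a. {p. da_active N K s p \<and> plist p ! fst s p = a})
      in (\<lambda>p. if da_active N K s p then Suc (fst s p) else fst s p,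
          \<lambda>a. find (\<lambda>q. q \<in> set_option (snd s a) \<union> props a) (alist a)))"

definition da_terminated :: "nat \<Rightarrow> nat \<Rightarrow> da_state \<Rightarrow> bool" where
  "da_terminated N K s \<longleftrightarrow> (\<forall>p<N. \<not> da_active N K s p)"

definition is_matching :: "nat \<Rightarrow> nat \<Rightarrow> (nat \<Rightarrow> nat option) \<Rightarrow> bool" where
  "is_matching N K \<mu> \<longleftrightarrow>
     (\<forall>p<N. \<forall>a. \<mu> p = Some a \<longrightarrow> a < K) \<and>
     (\<forall>p<N. \<forall>q<N. p \<noteq> q \<longrightarrow> \<mu> p = None \<or> \<mu> p \<noteq> \<mu> q)"

definition blocking :: "nat \<Rightarrow> (nat \<Rightarrow> nat list) \<Rightarrow> (nat \<Rightarrow> nat list) \<Rightarrow> (nat \<Rightarrow> nat option) \<Rightarrow> nat \<Rightarrow> nat \<Rightarrow> bool" where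
  "blocking N plist alist \<mu> p a \<longleftrightarrow>
     (\<mu> p = None \<or> (\<exists>b. \<mu> p = Some b \<and> prefers (plist p) a b)) \<and>
     ((\<forall>q<N. \<mu> q \<noteq> Some a) \<or> (\<exists>q<N. \<mu> q = Some a \<and> prefers (alist a) p q))"

definition stable :: "nat \<Rightarrow> nat \<Rightarrow> (nat \<Rightarrow> nat list) \<Rightarrow> (nat \<Rightarrow> nat list) \<Rightarrow> (nat \<Rightarrow> nat option) \<Rightarrow> bool" where
  "stable N K plist alist \<mu> \<longleftrightarrow>
     is_matching N K \<mu> \<and> (\<forall>p<N. \<forall>a<K. \<not> blocking N plist alist \<mu> p a)"

definition weakly_prefers :: "nat list \<Rightarrow> nat option \<Rightarrow> nat option \<Rightarrow> bool" where
  "weakly_prefers xs x y \<longleftrightarrow>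
     x = y \<or> (\<exists>a. x = Some a \<and> (y = None \<or> (\<exists>b. y = Some b \<and> prefers xs a b)))"

definition player_optimal_stable :: "nat \<Rightarrow> nat \<Rightarrow> (nat \<Rightarrow> nat list) \<Rightarrow> (nat \<Rightarrow> nat list) \<Rightarrow> (nat \<Rightarrow> nat option) \<Rightarrow> bool" where
  "player_optimal_stable N K plist alist \<mu> \<longleftrightarrow>
     stable N K plist alist \<mu> \<and>
     (\<forall>\<nu>. stable N K plist alist \<nu> \<longrightarrow> (\<forall>p<N. weakly_prefers (plist p) (\<mu> p) (\<nu> p)))"

end

theory Submission
  imports Defs
begin

text \<open>Both bounds are pigeonhole arguments against the N - 1 players other than a fixed
  player p, each of whom is held by (matched to) at most one arm. During deferred acceptance
  an arm that has received a proposal holds some player from then on; so while p is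
  unmatched, every arm p has proposed to holds another player, and p has made fewer than N
  proposals. In a stable matching every arm p strictly prefers to its partner is matched to
  another player (otherwise the two block), so fewer than N arms beat p's partner; and p is
  matched at all, because otherwise all K \<ge> N arms would be matched to other players.\<close>

lemma card_claimed_by_others_lt:
  assumes "p < N"
    and "\<And>a. a \<in> A \<Longrightarrow> \<exists>q<N. q \<noteq> p \<and> r a q"
    and "\<And>a b q. r a q \<Longrightarrow> r b q \<Longrightarrow> a = b"
  shows "card A < N"
proof -
  have "card A \<le> card ({0..<N} - {p})"
    by (rule card_le_if_inj_on_rel[where r = r]) (use assms in auto)
  also have "\<dots> < N"
    using \<open>p < N\<close> by simp
  finally show ?thesis .
qed

lemma prefers_if_mem_take:
  assumes "a \<in> set (take n xs)" and "b \<in> set xs" and "b \<notin> set (take n xs)"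
  shows "prefers xs a b"
proof -
  obtain i where i: "i < n" "i < length xs" "xs ! i = a"
    using assms(1) by (auto simp: in_set_conv_nth)
  obtain j where j: "j < length xs" "xs ! j = b"
    using assms(2) by (auto simp: in_set_conv_nth)
  have "n \<le> j"
  proof (rule ccontr)
    assume "\<not> n \<le> j"
    then have "b \<in> set (take n xs)"
      using j by (auto simp: in_set_conv_nth intro!: exI[of _ j])
    with assms(3) show False ..
  qed
  then show ?thesis
    unfolding prefers_def using i j by (intro exI[of _ i] exI[of _ j]) auto
qed

lemma valid_prefs_player_list:
  assumes "valid_prefs N K plist alist" and "p < N"
  shows "distinct (plist p)" and "set (plist p) = {0..<K}" and "length (plist p) = K"
  using assms distinct_card[of "plist p"] by (auto simp: valid_prefs_def)

lemma valid_prefs_arm_list: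
  assumes "valid_prefs N K plist alist" and "a < K"
  shows "set (alist a) = {0..<N}"
  using assms by (auto simp: valid_prefs_def)

lemma card_top_choices:
  assumes "valid_prefs N K plist alist" and "N \<le> K" and "p < N"
  shows "card (set (take N (plist p))) = N"
  using valid_prefs_player_list[OF assms(1,3)] assms(2) by (simp add: distinct_card)

lemma da_step_fst:
  "fst (da_step N K plist alist s) p = (if da_active N K s p then Suc (fst s p) else fst s p)"
  by (simp add: da_step_def Let_def)

lemma da_step_snd_SomeD:
  assumes "snd (da_step N K plist alist s) a = Some q"
  shows "snd s a = Some q \<or> da_active N K s q \<and> plist q ! fst s q = a"
  using assms by (auto simp: da_step_def Let_def find_Some_iff)

lemma da_step_snd_not_None:
  assumes "q \<in> set (alist a)" and "snd s a = Some q \<or> da_active N K s q \<and> plist q ! fst s q = a"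
  shows "snd (da_step N K plist alist s) a \<noteq> None"
  using assms by (auto simp: da_step_def Let_def find_None_iff)

lemma da_active_proposal_arm:
  assumes "valid_prefs N K plist alist" and "da_active N K s p"
  shows "plist p ! fst s p < K"
  using assms valid_prefs_player_list[of N K plist alist p]
  by (metis atLeastLessThan_iff da_active_def nth_mem)

definition da_invariant :: "nat \<Rightarrow> nat \<Rightarrow> (nat \<Rightarrow> nat list) \<Rightarrow> da_state \<Rightarrow> bool" where
  "da_invariant N K plist s \<longleftrightarrow>
     (\<forall>a q. snd s a = Some q \<longrightarrow> a < K \<and> q < N) \<and>
     (\<forall>p<N. \<forall>i<fst s p. snd s (plist p ! i) \<noteq> None) \<and>
     (\<forall>a b q. snd s a = Some q \<longrightarrow> snd s b = Some q \<longrightarrow> a = b)"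

lemma da_invariant_init: "da_invariant N K plist da_init"
  by (simp add: da_invariant_def da_init_def)

lemma da_invariant_step:
  assumes valid: "valid_prefs N K plist alist" and inv: "da_invariant N K plist s"
  shows "da_invariant N K plist (da_step N K plist alist s)"
proof -
  let ?s = "da_step N K plist alist s"
  have held_range: "a < K \<and> q < N" if "snd s a = Some q" for a q
    using inv that by (simp add: da_invariant_def)
  have proposed_held: "snd s (plist p ! i) \<noteq> None" if "p < N" "i < fst s p" for p i
    using inv that by (simp add: da_invariant_def)
  have held_once: "a = b" if "snd s a = Some q" "snd s b = Some q" for a b q
    using inv that by (auto simp: da_invariant_def)
  have active_unheld: "snd s a \<noteq> Some q" if "da_active N K s q" for a q
    using that held_range[of a q] by (auto simp: da_active_def da_matched_def)
  have new_range: "a < K \<and> q < N" if "snd ?s a = Some q" for a q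
    using da_step_snd_SomeD[OF that]
  proof
    assume "da_active N K s q \<and> plist q ! fst s q = a"
    then show ?thesis
      using da_active_proposal_arm[OF valid, of s q] by (auto simp: da_active_def)
  qed (rule held_range)
  have stays_held: "snd ?s a \<noteq> None" if "snd s a = Some q" for a q
    using da_step_snd_not_None[of q alist a s] held_range[OF that] valid_prefs_arm_list[OF valid] that
    by auto
  have new_proposed_held: "snd ?s (plist p ! i) \<noteq> None" if "p < N" "i < fst ?s p" for p i
  proof (cases "i < fst s p")
    case True
    then show ?thesis using proposed_held[OF \<open>p < N\<close>] stays_held by blast
  next
    case False
    with that have active: "da_active N K s p" and "i = fst s p"
      by (auto simp: da_step_fst split: if_splits)
    moreover have "p \<in> set (alist (plist p ! fst s p))"
      using valid_prefs_arm_list[OF valid da_active_proposal_arm[OF valid active]] \<open>p < N\<close>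
      by simp
    ultimately show ?thesis
      using da_step_snd_not_None[of p alist "plist p ! i" s] by simp
  qed
  have new_held_once: "a = b" if "snd ?s a = Some q" "snd ?s b = Some q" for a b q
    using da_step_snd_SomeD[OF that(1)] da_step_snd_SomeD[OF that(2)] held_once active_unheld
    by metis
  show ?thesis
    unfolding da_invariant_def using new_range new_proposed_held new_held_once by blast
qed

lemma da_invariant_iterate:
  assumes "valid_prefs N K plist alist"
  shows "da_invariant N K plist ((da_step N K plist alist ^^ m) da_init)"
  by (induction m) (simp_all add: da_invariant_init da_invariant_step[OF assms])

lemma da_unmatched_proposals_lt:
  assumes valid: "valid_prefs N K plist alist" and "N \<le> K"
    and inv: "da_invariant N K plist s" and "p < N" and unmatched: "\<not> da_matched K s p"
  shows "fst s p < N"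
proof (rule ccontr)
  assume "\<not> fst s p < N"
  have "card (set (take N (plist p))) < N"
  proof (rule card_claimed_by_others_lt[where r = "\<lambda>a q. snd s a = Some q", OF \<open>p < N\<close>])
    fix a assume "a \<in> set (take N (plist p))"
    then obtain i where "i < N" and a: "a = plist p ! i"
      by (auto simp: in_set_conv_nth)
    with \<open>\<not> fst s p < N\<close> have "i < fst s p"
      by simp
    with inv \<open>p < N\<close> a have "snd s a \<noteq> None"
      by (simp add: da_invariant_def)
    then obtain q where held: "snd s a = Some q"
      by blast
    with inv have "a < K" "q < N"
      by (auto simp: da_invariant_def)
    with held unmatched show "\<exists>q<N. q \<noteq> p \<and> snd s a = Some q"
      by (auto simp: da_matched_def)
  next
    fix a b q assume "snd s a = Some q" "snd s b = Some q"
    with inv show "a = b" by (auto simp: da_invariant_def)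
  qed
  then show False
    using card_top_choices[OF valid \<open>N \<le> K\<close> \<open>p < N\<close>] by simp
qed

lemma da_proposals_le:
  assumes "valid_prefs N K plist alist" and "N \<le> K" and "p < N"
  shows "fst ((da_step N K plist alist ^^ m) da_init) p \<le> N"
proof (induction m)
  case 0
  then show ?case by (simp add: da_init_def)
next
  case (Suc m)
  let ?s = "(da_step N K plist alist ^^ m) da_init"
  have "fst ?s p < N" if "da_active N K ?s p"
    using da_unmatched_proposals_lt[OF assms(1,2) da_invariant_iterate[OF assms(1)] assms(3)] that
    by (simp add: da_active_def)
  with Suc.IH show ?case
    by (auto simp: da_step_fst)
qed

lemma stable_matched:
  assumes "N \<le> K" and "stable N K plist alist \<mu>" and "p < N"
  shows "\<mu> p \<noteq> None"
proof
  assume unmatched: "\<mu> p = None"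
  have "card {0..<K} < N"
  proof (rule card_claimed_by_others_lt[where r = "\<lambda>a q. \<mu> q = Some a", OF \<open>p < N\<close>])
    fix a assume "a \<in> {0..<K}"
    with assms(2,3) have "\<not> blocking N plist alist \<mu> p a"
      by (simp add: stable_def)
    with unmatched show "\<exists>q<N. q \<noteq> p \<and> \<mu> q = Some a"
      by (auto simp: blocking_def)
  qed simp
  with \<open>N \<le> K\<close> show False by simp
qed

lemma stable_match_in_top_choices:
  assumes valid: "valid_prefs N K plist alist" and "N \<le> K"
    and stable: "stable N K plist alist \<mu>" and "p < N"
  shows "\<exists>a. \<mu> p = Some a \<and> a \<in> set (take N (plist p))"
proof -
  obtain b where b: "\<mu> p = Some b"
    using stable_matched[OF \<open>N \<le> K\<close> stable \<open>p < N\<close>] by blast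
  with stable \<open>p < N\<close> have "b \<in> set (plist p)"
    using valid_prefs_player_list(2)[OF valid \<open>p < N\<close>] by (auto simp: stable_def is_matching_def)
  have "b \<in> set (take N (plist p))"
  proof (rule ccontr)
    assume b_late: "b \<notin> set (take N (plist p))"
    have "card (set (take N (plist p))) < N"
    proof (rule card_claimed_by_others_lt[where r = "\<lambda>a q. \<mu> q = Some a", OF \<open>p < N\<close>])
      fix a assume a: "a \<in> set (take N (plist p))"
      then have "a < K"
        using valid_prefs_player_list(2)[OF valid \<open>p < N\<close>] in_set_takeD by fastforce
      with stable \<open>p < N\<close> have "\<not> blocking N plist alist \<mu> p a"
        by (simp add: stable_def)
      moreover have "prefers (plist p) a b"
        using prefers_if_mem_take[OF a \<open>b \<in> set (plist p)\<close> b_late] .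
      ultimately show "\<exists>q<N. q \<noteq> p \<and> \<mu> q = Some a"
        using a b b_late by (auto simp: blocking_def)
    qed simp
    then show False
      using card_top_choices[OF valid \<open>N \<le> K\<close> \<open>p < N\<close>] by simp
  qed
  with b show ?thesis by blast
qed

theorem lemmaB3:
  fixes N K :: nat and plist alist :: "nat \<Rightarrow> nat list"
  assumes "N \<le> K"
    and "valid_prefs N K plist alist"
  shows "(\<forall>m p. p < N \<longrightarrow> fst ((da_step N K plist alist ^^ m) da_init) p \<le> N)
       \<and> (\<forall>\<mu>. player_optimal_stable N K plist alist \<mu> \<longrightarrow>
              (\<forall>p<N. \<exists>a. \<mu> p = Some a \<and> a \<in> set (take N (plist p))))"
  using da_proposals_le[OF assms(2,1)] stable_match_in_top_choices[OF assms(2,1)]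
  by (auto simp: player_optimal_stable_def)

end
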